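(* Let $\mathcal{L}$ be a distributive abstract logic. For all $a,b\in Expr_{\mathcal{L}}$, $a\le b$ if and only if $a\Vdash_{\mathcal{L}} b$.
   Context: An abstract logic is a triple $\mathcal{L}=(Expr_{\mathcal{L}},Th_{\mathcal{L}},\mathcal{C}_{\mathcal{L}})$ where $Expr_{\mathcal{L}}$ is a set, $Th_{\mathcal{L}}$ a non-empty set of subsets of $Expr_{\mathcal{L}}$ (theories) closed under intersections of non-empty subfamilies, and $\mathcal{C}_{\mathcal{L}}$ a set of operations on $Expr_{\mathcal{L}}$. $\mathcal{L}$ is closed under union of chains if the union of every non-empty chain of theories is a theory. A theory $T$ is prime if $T=\bigcap\mathcal{T}$ with $\mathcal{T}\subseteq Th_{\mathcal{L}}$ non-empty finite implies $T\in\mathcal{T}$; totally prime if this holds for non-empty $\mathcal{T}$ of any size. $PTh_{\mathcal{L}}$, $TPTh_{\mathcal{L}}$ denote these sets. A distributive abstract logic is one closed under union of chains with binary connectives $\vee,\wedge$ such that for all $a,b$ and all $T\in TPTh_{\mathcal{L}}$: $a\vee b\in T$ iff $a\in T$ or $b\in T$; $a\wedge b\in T$ iff $a,b\in T$. $b\Vdash_{\mathcal{L}}a$ means $a$ belongs to every theory containing $b$. The order: $a\le b$ iff $S_a\subseteq S_b$, where $S_a=\{P\in PTh_{\mathcal{L}}: a\in P\}$. *)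

theory Defs
  imports Main
begin

text \<open>The set of operations C is left implicit;
the connectives of a distributive logic are given as binary operations on E.\<close>

definition abstract_logic :: "'a set \<Rightarrow> 'a set set \<Rightarrow> bool" where
  "abstract_logic E Th \<longleftrightarrow> Th \<noteq> {} \<and> (\<forall>T\<in>Th. T \<subseteq> E) \<and>
     (\<forall>\<T>. \<T> \<subseteq> Th \<and> \<T> \<noteq> {} \<longrightarrow> \<Inter>\<T> \<in> Th)"

definition closed_union_chains :: "'a set set \<Rightarrow> bool" where
  "closed_union_chains Th \<longleftrightarrow>
     (\<forall>\<C>. \<C> \<subseteq> Th \<and> \<C> \<noteq> {} \<and> Complete_Partial_Order.chain (\<subseteq>) \<C> \<longrightarrow> \<Union>\<C> \<in> Th)"

definition prime_theories :: "'a set set \<Rightarrow> 'a set set" where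
  "prime_theories Th = {T \<in> Th. \<forall>\<T>. \<T> \<subseteq> Th \<and> \<T> \<noteq> {} \<and> finite \<T> \<and> T = \<Inter>\<T> \<longrightarrow> T \<in> \<T>}"

definition totally_prime_theories :: "'a set set \<Rightarrow> 'a set set" where
  "totally_prime_theories Th = {T \<in> Th. \<forall>\<T>. \<T> \<subseteq> Th \<and> \<T> \<noteq> {} \<and> T = \<Inter>\<T> \<longrightarrow> T \<in> \<T>}"

definition distributive_logic ::
  "'a set \<Rightarrow> 'a set set \<Rightarrow> ('a \<Rightarrow> 'a \<Rightarrow> 'a) \<Rightarrow> ('a \<Rightarrow> 'a \<Rightarrow> 'a) \<Rightarrow> bool" where
  "distributive_logic E Th vee wedge \<longleftrightarrow>
     abstract_logic E Th \<and> closed_union_chains Th \<and>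
     (\<forall>a\<in>E. \<forall>b\<in>E. vee a b \<in> E \<and> wedge a b \<in> E) \<and>
     (\<forall>a\<in>E. \<forall>b\<in>E. \<forall>T\<in>totally_prime_theories Th.
        (vee a b \<in> T \<longleftrightarrow> a \<in> T \<or> b \<in> T) \<and> (wedge a b \<in> T \<longleftrightarrow> a \<in> T \<and> b \<in> T))"

definition entails :: "'a set set \<Rightarrow> 'a \<Rightarrow> 'a \<Rightarrow> bool" where
  "entails Th b a \<longleftrightarrow> (\<forall>T\<in>Th. b \<in> T \<longrightarrow> a \<in> T)"

definition S_set :: "'a set set \<Rightarrow> 'a \<Rightarrow> 'a set set" where
  "S_set Th a = {P \<in> prime_theories Th. a \<in> P}"

definition logic_le :: "'a set set \<Rightarrow> 'a \<Rightarrow> 'a \<Rightarrow> bool" where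
  "logic_le Th a b \<longleftrightarrow> S_set Th a \<subseteq> S_set Th b"

end

theory Submission
  imports Defs
begin

text \<open>Entailment trivially implies the order. Conversely, if \<open>a\<close> does not entail \<open>b\<close>, some
theory contains \<open>a\<close> but omits \<open>b\<close>; by Zorn's lemma (applicable since unions of chains of
theories are theories) it extends to a theory maximal among those omitting \<open>b\<close>, and such a
maximal theory is (totally) prime. It lies in \<open>S_a\<close> but not in \<open>S_b\<close>.\<close>

lemma totally_prime_theories_subset_prime: "totally_prime_theories Th \<subseteq> prime_theories Th"
  unfolding totally_prime_theories_def prime_theories_def by blast

lemma maximal_theory_omitting_totally_prime:
  assumes "M \<in> Th" "b \<notin> M"
    and maximal: "\<And>X. X \<in> Th \<Longrightarrow> M \<subseteq> X \<Longrightarrow> b \<notin> X \<Longrightarrow> X = M"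
  shows "M \<in> totally_prime_theories Th"
  unfolding totally_prime_theories_def
proof (intro CollectI conjI allI impI)
  fix \<T> assume \<T>: "\<T> \<subseteq> Th \<and> \<T> \<noteq> {} \<and> M = \<Inter>\<T>"
  then obtain X where X: "X \<in> \<T>" "b \<notin> X" using \<open>b \<notin> M\<close> by auto
  with \<T> have "X = M" by (intro maximal) auto
  with X show "M \<in> \<T>" by simp
qed (fact \<open>M \<in> Th\<close>)

lemma chain_union_omitting_theory:
  assumes "closed_union_chains Th" "C \<in> chains {X \<in> Th. T \<subseteq> X \<and> b \<notin> X}" "C \<noteq> {}"
  shows "\<Union>C \<in> {X \<in> Th. T \<subseteq> X \<and> b \<notin> X}"
proof -
  have "C \<subseteq> Th" "Complete_Partial_Order.chain (\<subseteq>) C"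
    using assms(2) unfolding chains_def chain_subset_def Complete_Partial_Order.chain_def by auto
  then have "\<Union>C \<in> Th" using assms(1,3) unfolding closed_union_chains_def by blast
  with assms(2,3) show ?thesis unfolding chains_def by auto
qed

lemma prime_theory_separation:
  assumes "closed_union_chains Th" "T \<in> Th" "b \<notin> T"
  obtains P where "P \<in> prime_theories Th" "T \<subseteq> P" "b \<notin> P"
proof -
  let ?A = "{X \<in> Th. T \<subseteq> X \<and> b \<notin> X}"
  have "\<exists>U\<in>?A. \<forall>X\<in>C. X \<subseteq> U" if "C \<in> chains ?A" for C
  proof (cases "C = {}")
    case True
    with assms(2,3) show ?thesis by auto
  next
    case False
    show ?thesis using chain_union_omitting_theory[OF assms(1) that False] by blast
  qed
  then obtain M where M: "M \<in> ?A" "\<forall>X\<in>?A. M \<subseteq> X \<longrightarrow> X = M"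
    using Zorn_Lemma2[of ?A] by blast
  then have "M \<in> totally_prime_theories Th"
    by (intro maximal_theory_omitting_totally_prime) blast+
  with M show thesis using totally_prime_theories_subset_prime that by blast
qed

theorem corollary3p11:
  assumes "distributive_logic E Th vee wedge"
    and "a \<in> E" and "b \<in> E"
  shows "logic_le Th a b \<longleftrightarrow> entails Th a b"
proof
  assume "entails Th a b"
  then show "logic_le Th a b"
    unfolding logic_le_def S_set_def entails_def prime_theories_def by blast
next
  assume le: "logic_le Th a b"
  have chains_closed: "closed_union_chains Th"
    using assms(1) unfolding distributive_logic_def by blast
  show "entails Th a b"
    unfolding entails_def
  proof (intro ballI impI, rule ccontr)
    fix T assume "T \<in> Th" "a \<in> T" "b \<notin> T"
    obtain P where "P \<in> prime_theories Th" "T \<subseteq> P" "b \<notin> P"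
      using prime_theory_separation[OF chains_closed \<open>T \<in> Th\<close> \<open>b \<notin> T\<close>] .
    with le \<open>a \<in> T\<close> show False unfolding logic_le_def S_set_def by blast
  qed
qed

end
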